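(* For $n\ge3$, the eigenvalues of $H(N_n)$ are $0$, $2$ and $-2$, each with multiplicity $n$.
   Context: For a digraph $X$ (finite vertex set, arcs are ordered pairs of distinct vertices), $H(X)$ has $(u,v)$-entry $1$ if $uv$ and $vu$ are arcs, $i$ if only $uv$ is an arc, $-i$ if only $vu$ is an arc, and $0$ otherwise. For $n\ge3$, the necklace digraph $N_n$ is the oriented graph with vertex set $\{v_j: j\in\mathbb{Z}_{2n}\}\cup\{w_k: k\in\mathbb{Z}_n\}$ (so $3n$ vertices) and arc set $\{v_jv_{j+1}: j\in\mathbb{Z}_{2n}\}\cup\{v_{2k}w_k,\ v_{2k+2}w_k: k\in\mathbb{Z}_n\}$, indices of $v$ taken modulo $2n$. *)

theory Defs
  imports "Jordan_Normal_Form.Char_Poly"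
begin

text \<open>A digraph on the vertex set {0..<m} is given by its arc set
  (a set of ordered pairs of distinct vertices).\<close>

definition herm_adj :: "nat \<Rightarrow> (nat \<times> nat) set \<Rightarrow> complex mat" where
  "herm_adj m A = mat m m (\<lambda>(u, v).
      if (u, v) \<in> A \<and> (v, u) \<in> A then 1
      else if (u, v) \<in> A then \<i>
      else if (v, u) \<in> A then - \<i>
      else 0)"

text \<open>Necklace digraph N_n on 3n vertices: v_j (j in Z_2n) is encoded as the
  number j (0 <= j < 2n), and w_k (k in Z_n) is encoded as the number 2n + k.\<close>

definition necklace_arcs :: "nat \<Rightarrow> (nat \<times> nat) set" where
  "necklace_arcs n =
      {(j, (j + 1) mod (2 * n)) | j. j < 2 * n}
    \<union> {(2 * k, 2 * n + k) | k. k < n}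
    \<union> {((2 * k + 2) mod (2 * n), 2 * n + k) | k. k < n}"

definition necklace_H :: "nat \<Rightarrow> complex mat" where
  "necklace_H n = herm_adj (3 * n) (necklace_arcs n)"

end

theory Submission
  imports Defs
begin

text \<open>Every arc of N_n joins an even-indexed v to an odd-indexed v or to a w. Listing the
  even v's first therefore puts H(N_n) into the form [[0, C], [C*, 0]] with C an n x 2n matrix,
  namely C = [i(I - S) | i(I + S)] for the cyclic shift S of Z_n. Hence
  C C* = 2(I + S S^T) = 4 I, and a block matrix of this shape with C C* = c I has
  characteristic polynomial x^(m-n) (x^2 - c)^n.\<close>

lemma det_permute_rows_cols:
  assumes A: "A \<in> carrier_mat n n" and p: "p permutes {0..<n}"
  shows "det (mat n n (\<lambda>(i, j). A $$ (p i, p j))) = det A"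
proof -
  have p_less: "i < n \<Longrightarrow> p i < n" for i using permutes_in_image[OF p] by auto
  define A' where "A' = mat n n (\<lambda>(i, j). A $$ (i, p j))"
  have A': "A' \<in> carrier_mat n n" unfolding A'_def by auto
  have rows: "mat n n (\<lambda>(i, j). A $$ (p i, p j)) = mat n n (\<lambda>(i, j). A' $$ (p i, j))"
    by (rule eq_matI) (auto simp: A'_def p_less)
  have cols: "transpose_mat A' = mat n n (\<lambda>(i, j). transpose_mat A $$ (p i, j))"
    by (rule eq_matI) (use A in \<open>auto simp: A'_def p_less\<close>)
  have "det A' = signof p * det A"
    using det_transpose[OF A'] det_transpose[OF A] det_permute_rows[OF _ p, of "transpose_mat A"] A
    by (simp add: cols)
  moreover have "signof p * signof p = (1 :: 'a)"
    by (simp add: sign_def)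
  ultimately show ?thesis
    using det_permute_rows[OF A' p] by (simp add: rows mult.assoc[symmetric])
qed

lemma char_poly_permute_rows_cols:
  assumes A: "A \<in> carrier_mat n n" and p: "p permutes {0..<n}"
  shows "char_poly (mat n n (\<lambda>(i, j). A $$ (p i, p j))) = char_poly A"
proof -
  have "char_poly_matrix (mat n n (\<lambda>(i, j). A $$ (p i, p j)))
      = mat n n (\<lambda>(i, j). char_poly_matrix A $$ (p i, p j))"
    using A permutes_in_image[OF p] permutes_inj[OF p]
    by (intro eq_matI) (auto simp: char_poly_matrix_def inj_eq)
  then show ?thesis
    unfolding char_poly_def using det_permute_rows_cols[OF char_poly_matrix_closed[OF A] p] by simp
qed

text \<open>Right multiplication by \<open>[[x I, 0], [D, x I]]\<close> makes the matrix block upper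
  triangular.\<close>

lemma det_four_block_scalar_diag:
  fixes C :: "'a :: idom mat" and x c :: 'a
  assumes C: "C \<in> carrier_mat n m" and D: "D \<in> carrier_mat m n"
    and CD: "C * D = c \<cdot>\<^sub>m 1\<^sub>m n" and nm: "n \<le> m" and x: "x \<noteq> 0"
  shows "det (four_block_mat (x \<cdot>\<^sub>m 1\<^sub>m n) (- C) (- D) (x \<cdot>\<^sub>m 1\<^sub>m m))
    = x ^ (m - n) * (x * x - c) ^ n"
proof -
  let ?M = "four_block_mat (x \<cdot>\<^sub>m 1\<^sub>m n) (- C) (- D) (x \<cdot>\<^sub>m 1\<^sub>m m)"
  let ?F = "four_block_mat (x \<cdot>\<^sub>m 1\<^sub>m n) (0\<^sub>m n m) D (x \<cdot>\<^sub>m 1\<^sub>m m)"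
  have "?M * ?F = four_block_mat (x \<cdot>\<^sub>m 1\<^sub>m n * (x \<cdot>\<^sub>m 1\<^sub>m n) + - C * D)
      (x \<cdot>\<^sub>m 1\<^sub>m n * 0\<^sub>m n m + - C * (x \<cdot>\<^sub>m 1\<^sub>m m))
      (- D * (x \<cdot>\<^sub>m 1\<^sub>m n) + x \<cdot>\<^sub>m 1\<^sub>m m * D) (- D * 0\<^sub>m n m + x \<cdot>\<^sub>m 1\<^sub>m m * (x \<cdot>\<^sub>m 1\<^sub>m m))"
    by (rule mult_four_block_mat) (use C D in auto)
  also have "\<dots> = four_block_mat ((x * x - c) \<cdot>\<^sub>m 1\<^sub>m n) (- (x \<cdot>\<^sub>m C)) (0\<^sub>m m n)
      ((x * x) \<cdot>\<^sub>m 1\<^sub>m m)"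
  proof (rule cong_four_block_mat)
    have "- C * D = - (c \<cdot>\<^sub>m 1\<^sub>m n)" using C D CD by simp
    then show "x \<cdot>\<^sub>m 1\<^sub>m n * (x \<cdot>\<^sub>m 1\<^sub>m n) + - C * D = (x * x - c) \<cdot>\<^sub>m 1\<^sub>m n"
      by (intro eq_matI) (auto simp: algebra_simps)
  qed (use C D in \<open>(intro eq_matI; auto simp: scalar_prod_def if_distrib[of "\<lambda>y. _ * y"]
        if_distrib[of "\<lambda>y. y * _"] cong: if_cong)+\<close>)
  finally have MF: "?M * ?F = \<dots>" .
  have "det ?M * det ?F = det (?M * ?F)"
    by (rule det_mult[symmetric]) auto
  also have "\<dots> = (x * x - c) ^ n * (x * x) ^ m"
    unfolding MF by (subst det_four_block_mat_lower_left_zero[of _ n _ m]) (use C in auto)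
  also have "(x * x) ^ m = (x ^ n * x ^ m) * x ^ (m - n)"
    using nm by (simp add: power_mult_distrib power_add[symmetric])
  also have "det ?F = x ^ n * x ^ m"
    by (subst det_four_block_mat_upper_right_zero[of _ n _ m]) (use D in auto)
  finally have "(x ^ n * x ^ m) * det ?M = (x ^ n * x ^ m) * (x ^ (m - n) * (x * x - c) ^ n)"
    by (simp add: ac_simps)
  then show ?thesis using x by simp
qed

lemma char_poly_four_block_zero_diag:
  fixes C :: "'a :: idom mat"
  assumes C: "C \<in> carrier_mat n m" and D: "D \<in> carrier_mat m n"
    and CD: "C * D = c \<cdot>\<^sub>m 1\<^sub>m n" and nm: "n \<le> m"
  shows "char_poly (four_block_mat (0\<^sub>m n n) C D (0\<^sub>m m m)) = [:0, 1:] ^ (m - n) * [:- c, 0, 1:] ^ n"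
proof -
  interpret const_poly: semiring_hom "\<lambda>a :: 'a. [:a:]"
    by unfold_locales auto
  let ?L = "map_mat (\<lambda>a. [:a:])"
  have M: "char_poly_matrix (four_block_mat (0\<^sub>m n n) C D (0\<^sub>m m m))
      = four_block_mat ([:0, 1:] \<cdot>\<^sub>m 1\<^sub>m n) (- ?L C) (- ?L D) ([:0, 1:] \<cdot>\<^sub>m 1\<^sub>m m)"
    using C D by (intro eq_matI) (auto simp: char_poly_matrix_def)
  have LCD: "?L C * ?L D = [:c:] \<cdot>\<^sub>m 1\<^sub>m n"
    unfolding const_poly.mat_hom_mult[OF C D, symmetric] CD by (rule eq_matI) auto
  have "char_poly (four_block_mat (0\<^sub>m n n) C D (0\<^sub>m m m))
      = [:0, 1:] ^ (m - n) * ([:0, 1:] * [:0, 1:] - [:c:]) ^ n"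
    unfolding char_poly_def M using C D nm LCD by (intro det_four_block_scalar_diag) auto
  then show ?thesis by simp
qed

lemma sum_Suc_mod: "(\<Sum>b<n. f (Suc b mod n)) = (\<Sum>b<n. f b)" for n :: nat
proof (cases n)
  case (Suc m)
  have "(\<Sum>b<Suc m. f (Suc b mod Suc m)) = (\<Sum>b<m. f (Suc b)) + f 0"
    by (simp add: sum.lessThan_Suc)
  also have "\<dots> = (\<Sum>b<Suc m. f b)"
    by (subst sum.lessThan_Suc_shift) (simp add: add.commute)
  finally show ?thesis using Suc by simp
qed simp

lemma sum_split_double: "(\<Sum>c\<in>{0..<2 * n}. g c) = (\<Sum>b<n. g b + g (n + b))" for n :: nat
proof -
  have "(\<Sum>c\<in>{0..<2 * n}. g c) = (\<Sum>c\<in>{0..<n}. g c) + (\<Sum>c\<in>{0 + n..<n + n}. g c)"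
    by (simp add: mult_2 sum.atLeastLessThan_concat)
  also have "\<dots> = (\<Sum>b<n. g b) + (\<Sum>b<n. g (n + b))"
    by (simp only: sum.shift_bounds_nat_ivl atLeast0LessThan add.commute)
  finally show ?thesis by (simp add: sum.distrib)
qed

definition conj_transpose :: "complex mat \<Rightarrow> complex mat" where
  "conj_transpose A = mat (dim_col A) (dim_row A) (\<lambda>(i, j). cnj (A $$ (j, i)))"

lemma conj_transpose_carrier: "A \<in> carrier_mat n m \<Longrightarrow> conj_transpose A \<in> carrier_mat m n"
  by (simp add: conj_transpose_def)

lemma herm_adj_carrier: "herm_adj m A \<in> carrier_mat m m"
  unfolding herm_adj_def by simp

lemma herm_adj_index:
  "u < m \<Longrightarrow> v < m \<Longrightarrow> herm_adj m A $$ (u, v) =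
    (if (u, v) \<in> A \<and> (v, u) \<in> A then 1
     else if (u, v) \<in> A then \<i>
     else if (v, u) \<in> A then - \<i>
     else 0)"
  unfolding herm_adj_def by simp

lemma herm_adj_cnj:
  "u < m \<Longrightarrow> v < m \<Longrightarrow> herm_adj m A $$ (v, u) = cnj (herm_adj m A $$ (u, v))"
  unfolding herm_adj_def by auto

lemma Suc_Suc_double_mod_double: "Suc (Suc (2 * k)) mod (2 * n) = 2 * (Suc k mod n)"
  using mod_mult_mult1[of 2 "Suc k" n] by simp

lemma even_Suc_mod_double: "j < 2 * n \<Longrightarrow> even (Suc j mod (2 * n)) \<longleftrightarrow> odd j"
  by (cases "Suc j = 2 * n") (auto, presburger)

lemma necklace_arcs_alt:
  "necklace_arcs n = {(j, Suc j mod (2 * n)) |j. j < 2 * n}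
    \<union> {(2 * k, 2 * n + k) |k. k < n} \<union> {(2 * (Suc k mod n), 2 * n + k) |k. k < n}"
  unfolding necklace_arcs_def by (simp add: Suc_Suc_double_mod_double)

lemma necklace_arc_parity:
  assumes "(u, v) \<in> necklace_arcs n"
  shows "(u < 2 * n \<and> even u) \<longleftrightarrow> \<not> (v < 2 * n \<and> even v)"
  using assms unfolding necklace_arcs_alt by (auto simp: even_Suc_mod_double)

lemma necklace_no_arc_from_w: "(2 * n + k, v) \<notin> necklace_arcs n"
proof -
  have "2 * (Suc k' mod n) < 2 * n" if "k' < n" for k'
    using that by simp
  then show ?thesis
    unfolding necklace_arcs_alt by fastforce
qed

lemma necklace_arc_even_odd_iff:
  "b < n \<Longrightarrow> (2 * i, Suc (2 * b)) \<in> necklace_arcs n \<longleftrightarrow> b = i"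
  unfolding necklace_arcs_alt by auto

lemma necklace_arc_odd_even_iff:
  "i < n \<Longrightarrow> b < n \<Longrightarrow> (Suc (2 * b), 2 * i) \<in> necklace_arcs n \<longleftrightarrow> Suc b mod n = i"
  unfolding necklace_arcs_alt by (auto simp: Suc_Suc_double_mod_double)

lemma necklace_arc_even_w_iff:
  "i < n \<Longrightarrow> k < n \<Longrightarrow>
    (2 * i, 2 * n + k) \<in> necklace_arcs n \<longleftrightarrow> k = i \<or> Suc k mod n = i"
  unfolding necklace_arcs_alt by auto

definition necklace_order :: "nat \<Rightarrow> nat \<Rightarrow> nat" where
  "necklace_order n p = (if p < n then 2 * p else if p < 2 * n then 2 * (p - n) + 1 else p)"

lemma necklace_order_permutes: "necklace_order n permutes {0..<3 * n}"
proof (rule bij_imp_permutes)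
  define g where "g v = (if v < 2 * n then if even v then v div 2 else n + v div 2 else v)" for v
  show "bij_betw (necklace_order n) {0..<3 * n} {0..<3 * n}"
    by (rule bij_betw_byWitness[where f' = g]) (auto simp: necklace_order_def g_def)
  show "p \<notin> {0..<3 * n} \<Longrightarrow> necklace_order n p = p" for p
    by (simp add: necklace_order_def)
qed

lemma necklace_order_even_vertex:
  "p < 3 * n \<Longrightarrow> (necklace_order n p < 2 * n \<and> even (necklace_order n p)) \<longleftrightarrow> p < n"
  by (auto simp: necklace_order_def)

text \<open>Columns c < n of C belong to v_(2c+1), the remaining ones to w_(c-n); the two halves
  are i(I - S) and i(I + S), where S has its ones at the positions (Suc c mod n, c).\<close>

definition necklace_C :: "nat \<Rightarrow> complex mat" where
  "necklace_C n = mat n (2 * n) (\<lambda>(i, c).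
     if c < n then \<i> * (of_bool (c = i) - of_bool (Suc c mod n = i))
     else \<i> * (of_bool (c - n = i) + of_bool (Suc (c - n) mod n = i)))"

lemma Suc_mod_neq: "2 \<le> n \<Longrightarrow> c < n \<Longrightarrow> Suc c mod n \<noteq> c"
  by (cases "Suc c = n") auto

lemma necklace_H_even_row:
  assumes n: "2 \<le> n" and i: "i < n" and c: "c < 2 * n"
  shows "necklace_H n $$ (2 * i, necklace_order n (n + c)) = necklace_C n $$ (i, c)"
proof (cases "c < n")
  case True
  then have "necklace_H n $$ (2 * i, necklace_order n (n + c))
      = herm_adj (3 * n) (necklace_arcs n) $$ (2 * i, Suc (2 * c))"
    by (simp add: necklace_order_def necklace_H_def)
  also have "\<dots> = (if c = i then \<i> else if Suc c mod n = i then - \<i> else 0)"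
    using i True Suc_mod_neq[OF n i]
    by (simp add: herm_adj_index necklace_arc_even_odd_iff necklace_arc_odd_even_iff)
  also have "\<dots> = necklace_C n $$ (i, c)"
    using i True Suc_mod_neq[OF n True] by (auto simp: necklace_C_def)
  finally show ?thesis .
next
  case False
  then obtain k where k: "c = n + k" "k < n"
    using c le_Suc_ex[of n c] by fastforce
  then have "necklace_H n $$ (2 * i, necklace_order n (n + c))
      = herm_adj (3 * n) (necklace_arcs n) $$ (2 * i, 2 * n + k)"
    by (simp add: necklace_order_def necklace_H_def add.assoc mult_2)
  also have "\<dots> = (if k = i \<or> Suc k mod n = i then \<i> else 0)"
    using i k by (simp add: herm_adj_index necklace_arc_even_w_iff necklace_no_arc_from_w)
  also have "\<dots> = necklace_C n $$ (i, c)"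
    using i k Suc_mod_neq[OF n i] by (auto simp: necklace_C_def)
  finally show ?thesis .
qed

lemma necklace_C_carrier: "necklace_C n \<in> carrier_mat n (2 * n)"
  by (simp add: necklace_C_def)

lemma necklace_H_reordered:
  assumes n: "2 \<le> n"
  shows "mat (3 * n) (3 * n) (\<lambda>(p, q). necklace_H n $$ (necklace_order n p, necklace_order n q))
    = four_block_mat (0\<^sub>m n n) (necklace_C n) (conj_transpose (necklace_C n)) (0\<^sub>m (2 * n) (2 * n))"
    (is "_ = ?B")
proof (rule eq_matI)
  let ?H = "\<lambda>p q. necklace_H n $$ (necklace_order n p, necklace_order n q)"
  have order_less: "p < 3 * n \<Longrightarrow> necklace_order n p < 3 * n" for p
    using permutes_in_image[OF necklace_order_permutes] by simp
  have upper: "?H p q = necklace_C n $$ (p, q - n)" if "p < n" "n \<le> q" "q < 3 * n" for p q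
    using necklace_H_even_row[OF n \<open>p < n\<close>, of "q - n"] that
    by (simp add: necklace_order_def)
  have zero: "?H p q = 0" if p: "p < 3 * n" and q: "q < 3 * n" and "p < n \<longleftrightarrow> q < n" for p q
  proof -
    have no_arc: "(necklace_order n p', necklace_order n q') \<notin> necklace_arcs n"
      if "p' < 3 * n" "q' < 3 * n" "p' < n \<longleftrightarrow> q' < n" for p' q'
      using that necklace_arc_parity necklace_order_even_vertex by metis
    show ?thesis
      using no_arc[OF p q] no_arc[OF q p] that
      by (simp add: necklace_H_def herm_adj_index order_less)
  qed
  have lower: "?H p q = cnj (?H q p)" if "p < 3 * n" "q < 3 * n" for p q
    unfolding necklace_H_def using that by (intro herm_adj_cnj order_less)
  fix p q
  assume "p < dim_row ?B" "q < dim_col ?B"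
  then have p: "p < 3 * n" and q: "q < 3 * n"
    using necklace_C_carrier by auto
  have "?B $$ (p, q) = (if p < n then if q < n then 0 else necklace_C n $$ (p, q - n)
      else if q < n then cnj (necklace_C n $$ (q, p - n)) else 0)"
    using p q by (simp add: conj_transpose_def necklace_C_def)
  then show "mat (3 * n) (3 * n) (\<lambda>(p, q). ?H p q) $$ (p, q) = ?B $$ (p, q)"
    using p q upper[of p q] upper[of q p] zero[OF p q] lower[OF p q] by auto
qed (simp_all add: necklace_C_def conj_transpose_def)

lemma necklace_C_mult_conj_transpose:
  "necklace_C n * conj_transpose (necklace_C n) = 4 \<cdot>\<^sub>m 1\<^sub>m n"
proof (rule eq_matI)
  let ?C = "necklace_C n"
  fix i j
  assume "i < dim_row (4 \<cdot>\<^sub>m 1\<^sub>m n :: complex mat)" "j < dim_col (4 \<cdot>\<^sub>m 1\<^sub>m n :: complex mat)"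
  then have i: "i < n" and j: "j < n" by auto
  define \<delta> where "\<delta> k b = (of_bool (b = k) :: complex)" for k b :: nat
  define \<sigma> where "\<sigma> k b = \<delta> k (Suc b mod n)" for k b :: nat
  have cnj_of_bool: "cnj (of_bool P) = of_bool P" for P
    by (cases P) auto
  have "(?C * conj_transpose ?C) $$ (i, j)
      = (\<Sum>c\<in>{0..<2 * n}. ?C $$ (i, c) * cnj (?C $$ (j, c)))"
    using i j by (simp add: necklace_C_def conj_transpose_def scalar_prod_def)
  also have "\<dots> = (\<Sum>b<n. ?C $$ (i, b) * cnj (?C $$ (j, b))
      + ?C $$ (i, n + b) * cnj (?C $$ (j, n + b)))"
    by (rule sum_split_double)
  also have "\<dots> = (\<Sum>b<n. 2 * (\<delta> i b * \<delta> j b + \<sigma> i b * \<sigma> j b))"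
    using i j
    by (intro sum.cong) (auto simp: necklace_C_def \<delta>_def \<sigma>_def cnj_of_bool algebra_simps)
  also have "\<dots> = 2 * (\<Sum>b<n. \<delta> i b * \<delta> j b) + 2 * (\<Sum>b<n. \<sigma> i b * \<sigma> j b)"
    by (simp add: sum.distrib sum_distrib_left)
  also have "(\<Sum>b<n. \<sigma> i b * \<sigma> j b) = (\<Sum>b<n. \<delta> i b * \<delta> j b)"
    unfolding \<sigma>_def by (rule sum_Suc_mod)
  also have "(\<Sum>b<n. \<delta> i b * \<delta> j b) = of_bool (i = j)"
    using i by (simp add: \<delta>_def)
  finally show "(?C * conj_transpose ?C) $$ (i, j) = (4 \<cdot>\<^sub>m 1\<^sub>m n) $$ (i, j)"
    using i j by simp
qed (simp_all add: necklace_C_def conj_transpose_def)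

theorem corollary7p2:
  fixes n :: nat
  assumes "n \<ge> 3"
  shows "char_poly (necklace_H n) = [:0, 1:] ^ n * [:-2, 1:] ^ n * [:2, 1:] ^ n"
proof -
  let ?C = "necklace_C n"
  have H: "necklace_H n \<in> carrier_mat (3 * n) (3 * n)"
    by (simp add: necklace_H_def herm_adj_carrier)
  have "char_poly (necklace_H n)
      = char_poly (four_block_mat (0\<^sub>m n n) ?C (conj_transpose ?C) (0\<^sub>m (2 * n) (2 * n)))"
    using char_poly_permute_rows_cols[OF H necklace_order_permutes] necklace_H_reordered assms
    by simp
  also have "\<dots> = [:0, 1:] ^ (2 * n - n) * [:- 4, 0, 1:] ^ n"
    by (intro char_poly_four_block_zero_diag necklace_C_carrier necklace_C_mult_conj_transpose
        conj_transpose_carrier) simp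
  also have "\<dots> = [:0, 1:] ^ n * ([:-2, 1:] * [:2, 1:]) ^ n"
    by simp
  finally show ?thesis
    by (simp only: power_mult_distrib mult.assoc)
qed

end
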